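(* For every integer $n>2$ there exists a finite Blaschke product $B$ of degree $n$ with $M(B)\le n+1$ and $m(B)<n-1$.
   Context: A finite Blaschke product of degree $n$ is $B(z)=\alpha\prod_{k=1}^n \frac{z-a_k}{1-\overline{a_k}z}$ with $a_k\in\mathbb D=\{|z|<1\}$, $\alpha\in\mathbb T=\{|z|=1\}$; $M(B)=\sup_{|z|=1}|B'(z)|$, $m(B)=\inf_{|z|=1}|B'(z)|$. *)

theory Defs
  imports "HOL-Analysis.Analysis"
begin

definition blaschke :: "complex \<Rightarrow> complex list \<Rightarrow> complex \<Rightarrow> complex" where
  "blaschke \<alpha> as z = \<alpha> * (\<Prod>a\<leftarrow>as. (z - a) / (1 - cnj a * z))"

definition is_blaschke :: "nat \<Rightarrow> (complex \<Rightarrow> complex) \<Rightarrow> bool" where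
  "is_blaschke n B \<longleftrightarrow> (\<exists>\<alpha> as. norm \<alpha> = 1 \<and> length as = n \<and>
      (\<forall>a\<in>set as. norm a < 1) \<and> B = blaschke \<alpha> as)"

definition bl_M :: "(complex \<Rightarrow> complex) \<Rightarrow> real" where
  "bl_M B = (SUP z\<in>sphere 0 1. norm (deriv B z))"

definition bl_m :: "(complex \<Rightarrow> complex) \<Rightarrow> real" where
  "bl_m B = (INF z\<in>sphere 0 1. norm (deriv B z))"

end

theory Submission
  imports Defs
begin

text \<open>On the unit circle every Blaschke factor has modulus one and logarithmic derivative
  \<open>P(z,a)/z\<close>, where \<open>P(z,a) = (1 - |a|\<^sup>2)/|z - a|\<^sup>2\<close> is the Poisson kernel; hence
  \<open>|B'(z)| = \<Sum>\<^sub>k P(z,a\<^sub>k)\<close> there. Zeros at the origin contribute exactly \<open>1\<close> each. For the three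
  zeros \<open>2/5\<close>, \<open>-2/5\<close>, \<open>-2i/5\<close> the kernels equal \<open>21/(29 \<mp> 20 Re z)\<close> and \<open>21/(29 + 20 Im z)\<close>;
  their sum is at most \<open>4\<close> on the whole circle (a cubic inequality in \<open>Im z\<close>), while at
  \<open>z = i\<close> it is \<open>21/29 + 21/29 + 21/49 < 2\<close>. Adding \<open>n - 3\<close> zeros at the origin gives the
  required product of degree \<open>n\<close>.\<close>

definition blaschke_factor :: "complex \<Rightarrow> complex \<Rightarrow> complex" where
  "blaschke_factor a w = (w - a) / (1 - cnj a * w)"

definition poisson_kernel :: "complex \<Rightarrow> complex \<Rightarrow> real" where
  "poisson_kernel z a = (1 - (norm a)\<^sup>2) / (norm (z - a))\<^sup>2"

lemma blaschke_Nil: "blaschke \<alpha> [] = (\<lambda>z. \<alpha>)"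
  by (simp add: blaschke_def fun_eq_iff)

lemma blaschke_Cons: "blaschke \<alpha> (a # as) = (\<lambda>z. blaschke_factor a z * blaschke \<alpha> as z)"
  by (simp add: blaschke_def blaschke_factor_def fun_eq_iff)

lemma unit_circle_denominator:
  assumes "norm z = 1"
  shows "1 - cnj a * z = z * cnj (z - a)"
proof -
  have "z * cnj z = 1"
    using assms by (metis complex_norm_square norm_one of_real_1 power_one)
  then show ?thesis by (simp add: algebra_simps)
qed

lemma norm_blaschke_factor_unit_circle:
  assumes z: "norm z = 1" and a: "norm a < 1"
  shows "norm (blaschke_factor a z) = 1"
proof -
  have "z - a \<noteq> 0" using z a by auto
  then show ?thesis
    unfolding blaschke_factor_def unit_circle_denominator[OF z]
    using z by (simp add: norm_mult norm_divide del: complex_cnj_diff)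
qed

lemma has_field_derivative_blaschke_factor_unit_circle:
  assumes z: "norm z = 1" and a: "norm a < 1"
  shows "(blaschke_factor a has_field_derivative
           blaschke_factor a z * of_real (poisson_kernel z a) / z) (at z)"
proof -
  have za: "z - a \<noteq> 0" and zn: "z \<noteq> 0" using z a by auto
  have den: "1 - cnj a * z \<noteq> 0"
    using za zn by (simp add: unit_circle_denominator[OF z])
  have "(blaschke_factor a has_field_derivative
          (1 * (1 - cnj a * z) - (z - a) * (- cnj a * 1)) / ((1 - cnj a * z) * (1 - cnj a * z))) (at z)"
    unfolding blaschke_factor_def
    by (rule DERIV_divide[where g="\<lambda>w. 1 - cnj a * w"]) (use den in \<open>auto intro!: derivative_eq_intros\<close>)
  moreover have "(1 * (1 - cnj a * z) - (z - a) * (- cnj a * 1)) / ((1 - cnj a * z) * (1 - cnj a * z))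
      = blaschke_factor a z * of_real (poisson_kernel z a) / z"
  proof -
    have num: "1 * (1 - cnj a * z) - (z - a) * (- cnj a * 1) = 1 - a * cnj a"
      by (simp add: algebra_simps)
    have ker: "of_real (poisson_kernel z a) = (1 - a * cnj a) / ((z - a) * cnj (z - a))"
      by (simp only: poisson_kernel_def of_real_divide of_real_diff of_real_1 complex_norm_square)
    have fld: "\<And>(u::complex) v w c. u \<noteq> 0 \<Longrightarrow> v \<noteq> 0 \<Longrightarrow> w \<noteq> 0 \<Longrightarrow>
        c / ((u * w) * (u * w)) = v / (u * w) * (c / (v * w)) / u"
      by (simp add: field_simps)
    have "cnj (z - a) \<noteq> 0" using za by simp
    then show ?thesis
      unfolding num ker unfolding blaschke_factor_def unit_circle_denominator[OF z]
      by (rule fld[OF zn za])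
  qed
  ultimately show ?thesis by simp
qed

lemma norm_blaschke_unit_circle:
  assumes "norm z = 1" and "\<forall>a\<in>set as. norm a < 1"
  shows "norm (blaschke \<alpha> as z) = norm \<alpha>"
  using assms(2)
  by (induction as)
     (simp_all add: blaschke_Nil blaschke_Cons norm_mult norm_blaschke_factor_unit_circle[OF assms(1)])

lemma has_field_derivative_blaschke_unit_circle:
  assumes z: "norm z = 1" and as: "\<forall>a\<in>set as. norm a < 1"
  shows "(blaschke \<alpha> as has_field_derivative
            blaschke \<alpha> as z * of_real (\<Sum>a\<leftarrow>as. poisson_kernel z a) / z) (at z)"
  using as
proof (induction as)
  case Nil
  then show ?case by (simp add: blaschke_Nil)
next
  case (Cons a as)
  have "z \<noteq> 0" using z by auto
  have "((\<lambda>w. blaschke_factor a w * blaschke \<alpha> as w) has_field_derivative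
     blaschke_factor a z * (blaschke \<alpha> as z * of_real (\<Sum>a\<leftarrow>as. poisson_kernel z a) / z)
     + blaschke_factor a z * of_real (poisson_kernel z a) / z * blaschke \<alpha> as z) (at z)"
    using Cons by (intro DERIV_mult' has_field_derivative_blaschke_factor_unit_circle[OF z]) auto
  then show ?case
    unfolding blaschke_Cons by (rule DERIV_cong) (use \<open>z \<noteq> 0\<close> in \<open>simp add: field_simps\<close>)
qed

lemma poisson_kernel_nonneg: "norm a < 1 \<Longrightarrow> poisson_kernel z a \<ge> 0"
  unfolding poisson_kernel_def by (simp add: abs_square_le_1 power_le_one)

lemma norm_deriv_blaschke_unit_circle:
  assumes z: "norm z = 1" and as: "\<forall>a\<in>set as. norm a < 1" and \<alpha>: "norm \<alpha> = 1"
  shows "norm (deriv (blaschke \<alpha> as) z) = (\<Sum>a\<leftarrow>as. poisson_kernel z a)"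
proof -
  have "(\<Sum>a\<leftarrow>as. poisson_kernel z a) \<ge> 0"
    using as by (induction as) (auto intro: add_nonneg_nonneg poisson_kernel_nonneg)
  then show ?thesis
    using DERIV_imp_deriv[OF has_field_derivative_blaschke_unit_circle[OF z as]]
      norm_blaschke_unit_circle[OF z as] \<alpha> z
    by (simp add: norm_mult norm_divide)
qed

lemma poisson_kernel_unit_circle:
  assumes "norm z = 1"
  shows "poisson_kernel z a = (1 - (norm a)\<^sup>2) / (1 + (norm a)\<^sup>2 - 2 * Re (cnj a * z))"
proof -
  have "(Re z)\<^sup>2 + (Im z)\<^sup>2 = 1" using assms cmod_power2[of z] by simp
  then have "(norm (z - a))\<^sup>2 = 1 + (norm a)\<^sup>2 - 2 * Re (cnj a * z)"
    unfolding cmod_power2[of "z - a"] cmod_power2[of a] by (simp add: power2_eq_square algebra_simps)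
  then show ?thesis unfolding poisson_kernel_def by simp
qed

lemma poisson_kernel_two_fifths:
  assumes "norm z = 1" and "norm a = 2/5"
  shows "poisson_kernel z a = 21 / (29 - 50 * Re (cnj a * z))"
proof -
  have "(norm a)\<^sup>2 = 4/25" unfolding assms(2) by (simp add: power2_eq_square)
  moreover have "(1 - 4/25) / (1 + 4/25 - 2 * r) = 21 / (29 - 50 * r)" for r :: real
    by (simp add: divide_simps)
  ultimately show ?thesis
    unfolding poisson_kernel_unit_circle[OF assms(1)] by (simp only:)
qed

lemma bl_M_le:
  assumes "\<And>z. norm z = 1 \<Longrightarrow> norm (deriv B z) \<le> c"
  shows "bl_M B \<le> c"
  unfolding bl_M_def by (rule cSUP_least) (auto simp: sphere_eq_empty assms)

lemma bl_m_le:
  assumes "norm z = 1"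
  shows "bl_m B \<le> norm (deriv B z)"
  unfolding bl_m_def by (rule cINF_lower) (auto intro: bdd_belowI[where m=0] simp: assms)

lemma three_kernels_le_4:
  fixes x y :: real
  assumes "x\<^sup>2 + y\<^sup>2 = 1"
  shows "21 / (29 - 20 * x) + 21 / (29 + 20 * x) + 21 / (29 + 20 * y) \<le> 4"
proof -
  have "x\<^sup>2 \<le> 1" "y\<^sup>2 \<le> 1" using assms zero_le_power2[of x] zero_le_power2[of y] by linarith+
  then have "\<bar>x\<bar> \<le> 1" "\<bar>y\<bar> \<le> 1" by (simp_all add: abs_square_le_1)
  then have pos: "29 - 20 * x > 0" "29 + 20 * x > 0" "29 + 20 * y > 0" "441 + 400 * y\<^sup>2 > 0"
    by (auto intro: add_pos_nonneg)
  have "(29 - 20 * x) * (29 + 20 * x) = 441 + 400 * y\<^sup>2"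
    using assms by (simp add: algebra_simps power2_eq_square)
  then have pair: "21 / (29 - 20 * x) + 21 / (29 + 20 * x) = 1218 / (441 + 400 * y\<^sup>2)"
    using pos by (simp add: add_frac_eq)
  \<comment> \<open>With \<open>u = y + 1 \<ge> 0\<close> the cleared cubic is \<open>u (32000 (u - 29/32)\<^sup>2 + 18555/4) + 1653\<close>.\<close>
  define u where "u = y + 1"
  have "u \<ge> 0" using \<open>\<bar>y\<bar> \<le> 1\<close> by (simp add: u_def)
  then have "u * (32000 * (u - 29/32)\<^sup>2 + 18555/4) + 1653 > 0"
    by (simp add: add_nonneg_pos)
  then have "1218 * (29 + 20 * y) + 21 * (441 + 400 * y\<^sup>2) \<le> 4 * ((441 + 400 * y\<^sup>2) * (29 + 20 * y))"
    by (simp add: u_def power2_eq_square algebra_simps)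
  then have "1218 / (441 + 400 * y\<^sup>2) + 21 / (29 + 20 * y) \<le> 4"
    using pos by (simp add: add_frac_eq pos_divide_le_eq)
  then show ?thesis using pair by simp
qed

definition example_zeros :: "nat \<Rightarrow> complex list" where
  "example_zeros n = [2/5, -(2/5), -(2/5) * \<i>] @ replicate (n - 3) 0"

lemma example_zeros_in_disc: "\<forall>a\<in>set (example_zeros n). norm a < 1"
  by (auto simp: example_zeros_def norm_mult)

lemma norm_deriv_example_unit_circle:
  assumes z: "norm z = 1"
  shows "norm (deriv (blaschke 1 (example_zeros n)) z)
    = 21 / (29 - 20 * Re z) + 21 / (29 + 20 * Re z) + 21 / (29 + 20 * Im z) + real (n - 3)"
proof -
  have "poisson_kernel z (2/5) = 21 / (29 - 20 * Re z)"
    "poisson_kernel z (-(2/5)) = 21 / (29 + 20 * Re z)"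
    "poisson_kernel z (-(2/5) * \<i>) = 21 / (29 + 20 * Im z)"
    by (simp_all add: poisson_kernel_two_fifths[OF z] norm_mult)
  moreover have "poisson_kernel z 0 = 1" by (simp add: poisson_kernel_def z)
  moreover have "norm (deriv (blaschke 1 (example_zeros n)) z)
      = (\<Sum>a\<leftarrow>example_zeros n. poisson_kernel z a)"
    by (rule norm_deriv_blaschke_unit_circle[OF z example_zeros_in_disc]) simp
  ultimately show ?thesis by (simp add: example_zeros_def sum_list_replicate)
qed

theorem mainTheorem5:
  fixes n :: nat
  assumes "n > 2"
  shows "\<exists>B. is_blaschke n B \<and> bl_M B \<le> real n + 1 \<and> bl_m B < real n - 1"
proof (intro exI conjI)
  let ?B = "blaschke 1 (example_zeros n)"
  show "is_blaschke n ?B"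
    unfolding is_blaschke_def using assms example_zeros_in_disc
    by (intro exI[of _ 1] exI[of _ "example_zeros n"]) (simp add: example_zeros_def)
  show "bl_M ?B \<le> real n + 1"
  proof (rule bl_M_le)
    fix z :: complex assume z: "norm z = 1"
    have "(Re z)\<^sup>2 + (Im z)\<^sup>2 = 1" using z cmod_power2[of z] by simp
    then show "norm (deriv ?B z) \<le> real n + 1"
      using three_kernels_le_4 norm_deriv_example_unit_circle[OF z] assms by fastforce
  qed
  have "bl_m ?B \<le> norm (deriv ?B \<i>)" by (rule bl_m_le) simp
  also have "\<dots> = 21/29 + 21/29 + 21/49 + real (n - 3)"
    by (simp add: norm_deriv_example_unit_circle)
  also have "\<dots> < real n - 1" using assms by simp
  finally show "bl_m ?B < real n - 1" .
qed

end
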